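(* For all $s,t\in\Lambda^\infty$: if $s$ has no head normal form and $t\to^\infty_{\beta\bot}s$, then $t$ has no head normal form.
   Context: Fix an infinite set $V$ of variables and a set $C$ of constants with $V\cap C=\emptyset$, containing a distinguished constant $\bot$. $\Lambda^\infty$ is the set of infinitary lambda-terms: all finite and infinite terms generated coinductively by $t ::= c\mid x\mid t\,t\mid\lambda x.t$, identified up to $\alpha$-equivalence; $s[t/x]$ is capture-avoiding substitution; $\equiv$ is identity; an atom is a variable or constant. For $R\subseteq\Lambda^\infty\times\Lambda^\infty$, the compatible closure $\to_R$ is the least relation with $(s,t)\in R\Rightarrow s\to_R t$ and $s\to_R s'\Rightarrow st\to_R s't,\ ts\to_R ts',\ \lambda x.s\to_R\lambda x.s'$. $\to_\beta$ is the compatible closure of $R_\beta=\{((\lambda x.s)t,s[t/x])\}$. A term is in head normal form (hnf) if it is $\lambda x_1\ldots x_m.\,a\,t_1\ldots t_n$ ($m,n\ge0$, $a$ an atom, $a\not\equiv\bot$); $t$ has a hnf if $t\to^*_\beta t'$ for some $t'$ in hnf. $R_\bot=\{(t,\bot)\mid t\text{ has no hnf}, t\not\equiv\bot\}$; $\to_{\beta\bot}$ is the compatible closure of $R_\beta\cup R_\bot$. The infinitary closure $\to^\infty_{\beta\bot}$ is the greatest relation such that whenever $s\to^\infty_{\beta\bot}t$ (writing $\to^*$ for the reflexive-transitive closure of $\to_{\beta\bot}$): $t\equiv a$ atom and $s\to^*a$; or $t\equiv t_1't_2'$, $s\to^*t_1t_2$, $t_i\to^\infty_{\beta\bot}t_i'$;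 or $t\equiv\lambda x.r'$, $s\to^*\lambda x.r$, $r\to^\infty_{\beta\bot}r'$. *)

theory Defs
  imports Main
begin

text \<open>Infinitary lambda terms, represented coinductively with de Bruijn indices
  (so that alpha-equivalent terms are identical).\<close>

codatatype 'c lterm =
    Var nat
  | Const 'c
  | Bot
  | App "'c lterm" "'c lterm"
  | Lam "'c lterm"

primcorec lift :: "nat \<Rightarrow> 'c lterm \<Rightarrow> 'c lterm" where
  "lift k t = (case t of
      Var n \<Rightarrow> Var (if n < k then n else Suc n)
    | Const c \<Rightarrow> Const c
    | Bot \<Rightarrow> Bot
    | App t1 t2 \<Rightarrow> App (lift k t1) (lift k t2)
    | Lam r \<Rightarrow> Lam (lift (Suc k) r))"

text \<open>Capture-avoiding substitution: subst k u t replaces index k in t by u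
  (u already shifted to the binding depth), decrementing larger free indices.\<close>
primcorec subst :: "nat \<Rightarrow> 'c lterm \<Rightarrow> 'c lterm \<Rightarrow> 'c lterm" where
  "subst k u t = (case t of
      Var n \<Rightarrow> (if n = k then u else if k < n then Var (n - 1) else Var n)
    | Const c \<Rightarrow> Const c
    | Bot \<Rightarrow> Bot
    | App t1 t2 \<Rightarrow> App (subst k u t1) (subst k u t2)
    | Lam r \<Rightarrow> Lam (subst (Suc k) (lift 0 u) r))"

definition subst0 :: "'c lterm \<Rightarrow> 'c lterm \<Rightarrow> 'c lterm" where
  "subst0 s t = subst 0 t s"

inductive compat :: "('c lterm \<Rightarrow> 'c lterm \<Rightarrow> bool) \<Rightarrow> 'c lterm \<Rightarrow> 'c lterm \<Rightarrow> bool"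
  for R where
  base: "R s t \<Longrightarrow> compat R s t"
| appL: "compat R s s' \<Longrightarrow> compat R (App s t) (App s' t)"
| appR: "compat R s s' \<Longrightarrow> compat R (App t s) (App t s')"
| lam:  "compat R s s' \<Longrightarrow> compat R (Lam s) (Lam s')"

inductive R_beta :: "'c lterm \<Rightarrow> 'c lterm \<Rightarrow> bool" where
  "R_beta (App (Lam s) t) (subst0 s t)"

definition beta_step :: "'c lterm \<Rightarrow> 'c lterm \<Rightarrow> bool" where
  "beta_step = compat R_beta"

inductive hnf_body :: "'c lterm \<Rightarrow> bool" where
  "hnf_body (Var x)"
| "hnf_body (Const c)"
| "hnf_body t \<Longrightarrow> hnf_body (App t s)"

inductive is_hnf :: "'c lterm \<Rightarrow> bool" where
  "hnf_body t \<Longrightarrow> is_hnf t"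
| "is_hnf t \<Longrightarrow> is_hnf (Lam t)"

definition has_hnf :: "'c lterm \<Rightarrow> bool" where
  "has_hnf t \<longleftrightarrow> (\<exists>t'. beta_step\<^sup>*\<^sup>* t t' \<and> is_hnf t')"

inductive R_bot :: "'c lterm \<Rightarrow> 'c lterm \<Rightarrow> bool" where
  "\<not> has_hnf t \<Longrightarrow> t \<noteq> Bot \<Longrightarrow> R_bot t Bot"

definition beta_bot_step :: "'c lterm \<Rightarrow> 'c lterm \<Rightarrow> bool" where
  "beta_bot_step = compat (\<lambda>s t. R_beta s t \<or> R_bot s t)"

definition is_atom :: "'c lterm \<Rightarrow> bool" where
  "is_atom t \<longleftrightarrow> (\<exists>x. t = Var x) \<or> (\<exists>c. t = Const c) \<or> t = Bot"

coinductive inf_bb :: "'c lterm \<Rightarrow> 'c lterm \<Rightarrow> bool" where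
  atom: "is_atom a \<Longrightarrow> beta_bot_step\<^sup>*\<^sup>* s a \<Longrightarrow> inf_bb s a"
| app: "beta_bot_step\<^sup>*\<^sup>* s (App t1 t2) \<Longrightarrow> inf_bb t1 t1' \<Longrightarrow> inf_bb t2 t2'
        \<Longrightarrow> inf_bb s (App t1' t2')"
| lam: "beta_bot_step\<^sup>*\<^sup>* s (Lam r) \<Longrightarrow> inf_bb r r' \<Longrightarrow> inf_bb s (Lam r')"

end

theory Submission
  imports Defs "HOL-Library.Multiset" "HOL-Library.Function_Algebras"
begin

text \<open>Typability in a system of non-idempotent intersection types characterises head
  normalisability: a typable term head-reduces, with strictly decreasing derivation size, to a
  head normal form, and conversely every head normal form is typable and typability is stable
  under \<beta>-expansion. Derivation sizes never grow along \<beta>\<bottom>-steps: for \<beta>-steps by the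
  substitution lemma, and a \<bottom>-step cannot rewrite a typed subterm, since typed terms have a head
  normal form. So if \<open>t \<rightarrow>\<^sup>\<infinity> s\<close> and \<open>t\<close> is typable, then \<open>s\<close> is typable, by induction on the size of
  the derivation for \<open>t\<close>: although the derivation of \<open>t \<rightarrow>\<^sup>\<infinity> s\<close> may be infinite, each subterm
  it descends into carries a strictly smaller typing derivation.\<close>

lemma lift_simps [simp]:
  "lift k (Var n) = Var (if n < k then n else Suc n)"
  "lift k (Const c) = Const c"
  "lift k Bot = Bot"
  "lift k (App a b) = App (lift k a) (lift k b)"
  "lift k (Lam a) = Lam (lift (Suc k) a)"
  by (subst lift.code; simp)+

lemma subst_simps [simp]:
  "subst k u (Var n) = (if n = k then u else if k < n then Var (n - 1) else Var n)"
  "subst k u (Const c) = Const c"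
  "subst k u Bot = Bot"
  "subst k u (App a b) = App (subst k u a) (subst k u b)"
  "subst k u (Lam a) = Lam (subst (Suc k) (lift 0 u) a)"
  by (subst subst.code; simp)+

datatype itype = Base | Arrow "itype multiset" itype

type_synonym ctx = "nat \<Rightarrow> itype multiset"

definition ctx_single :: "nat \<Rightarrow> itype \<Rightarrow> ctx" where
  "ctx_single x \<tau> = (\<lambda>i. if i = x then {#\<tau>#} else {#})"

definition ctx_insert :: "nat \<Rightarrow> ctx \<Rightarrow> ctx" where
  "ctx_insert j G = (\<lambda>i. if i < j then G i else if i = j then {#} else G (i - 1))"

definition ctx_drop :: "nat \<Rightarrow> ctx \<Rightarrow> ctx" where
  "ctx_drop j G = (\<lambda>i. if i < j then G i else G (Suc i))"

lemmas ctx_defs = ctx_single_def ctx_insert_def ctx_drop_def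

lemma ctx_simps [simp]:
  "ctx_insert j (G + D) = ctx_insert j G + ctx_insert j D"
  "ctx_insert j 0 = 0"
  "ctx_insert j (ctx_single x \<tau>) = ctx_single (if x < j then x else Suc x) \<tau>"
  "ctx_drop 0 (ctx_insert (Suc j) G) = ctx_insert j (ctx_drop 0 G)"
  "ctx_drop 0 (ctx_insert 0 G) = G"
  "ctx_insert (Suc j) G 0 = G 0"
  "ctx_insert 0 G 0 = {#}"
  "ctx_drop j (G + D) = ctx_drop j G + ctx_drop j D"
  "ctx_drop j 0 = 0"
  "ctx_drop j (ctx_single j \<tau>) = 0"
  "ctx_drop 0 (ctx_drop (Suc j) G) = ctx_drop j (ctx_drop 0 G)"
  "ctx_drop (Suc j) G 0 = G 0"
  by (auto simp: ctx_defs fun_eq_iff)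

lemma ctx_single_apply: "ctx_single x \<tau> i = (if i = x then {#\<tau>#} else {#})"
  by (simp add: ctx_single_def)

lemma ctx_drop_single:
  "x \<noteq> j \<Longrightarrow> ctx_drop j (ctx_single x \<tau>) = ctx_single (if j < x then x - 1 else x) \<tau>"
  by (auto simp: ctx_defs fun_eq_iff)

text \<open>The induction method presents context variables \<eta>-expanded; with pointwise rewriting
  of \<open>+\<close> and \<open>0\<close> enabled, contexts such as \<open>G + D\<close> would then turn into \<lambda>-terms that the
  context simplification rules no longer match.\<close>

declare plus_fun_apply [simp del] zero_fun_apply [simp del]

text \<open>Non-idempotent intersection types: in \<open>typing G t \<tau> n\<close>, a multiset
  argument type lists one type per use of the argument, and \<open>n\<close> is the size
  of the derivation. \<open>Bot\<close> has no typing rule.\<close>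

inductive typing :: "ctx \<Rightarrow> 'c lterm \<Rightarrow> itype \<Rightarrow> nat \<Rightarrow> bool"
  and mtyping :: "ctx \<Rightarrow> 'c lterm \<Rightarrow> itype multiset \<Rightarrow> nat \<Rightarrow> bool" where
  var: "typing (ctx_single x \<tau>) (Var x) \<tau> (Suc 0)"
| const: "typing 0 (Const c) \<tau> (Suc 0)"
| lam: "typing G p \<tau> n \<Longrightarrow> typing (ctx_drop 0 G) (Lam p) (Arrow (G 0) \<tau>) (Suc n)"
| app: "typing G r (Arrow M \<tau>) n \<Longrightarrow> mtyping D u M m \<Longrightarrow> typing (G + D) (App r u) \<tau> (Suc (n + m))"
| mempty: "mtyping 0 u {#} 0"
| madd: "typing G u \<tau> n \<Longrightarrow> mtyping D u M m \<Longrightarrow> mtyping (G + D) u (add_mset \<tau> M) (n + m)"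

inductive_cases typing_LamE: "typing G (Lam p) \<tau> n"
inductive_cases typing_AppE: "typing G (App r u) \<tau> n"

lemma typing_lamI:
  "typing G p \<tau> n \<Longrightarrow> G' = ctx_drop 0 G \<Longrightarrow> \<sigma> = Arrow (G 0) \<tau> \<Longrightarrow> n' = Suc n
    \<Longrightarrow> typing G' (Lam p) \<sigma> n'"
  using lam by blast

lemma typing_appI:
  "typing G r (Arrow M \<tau>) n \<Longrightarrow> mtyping D u M m \<Longrightarrow> G' = G + D \<Longrightarrow> n' = Suc (n + m)
    \<Longrightarrow> typing G' (App r u) \<tau> n'"
  using app by blast

lemma mtyping_addI:
  "typing G u \<tau> n \<Longrightarrow> mtyping D u M m \<Longrightarrow> G' = G + D \<Longrightarrow> n' = n + m
    \<Longrightarrow> mtyping G' u (add_mset \<tau> M) n'"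
  using madd by blast

lemma mtyping_emptyD: "mtyping D u {#} m \<Longrightarrow> D = 0 \<and> m = 0"
  by (cases rule: mtyping.cases) auto

lemma mtyping_single_iff: "mtyping G u {#\<tau>#} n \<longleftrightarrow> typing G u \<tau> n"
proof
  show "mtyping G u {#\<tau>#} n \<Longrightarrow> typing G u \<tau> n"
    by (erule mtyping.cases) (auto dest!: mtyping_emptyD)
  show "typing G u \<tau> n \<Longrightarrow> mtyping G u {#\<tau>#} n"
    using madd[OF _ mempty, of G u \<tau> n] by simp
qed

lemma mtyping_union:
  "mtyping D1 u M1 m1 \<Longrightarrow> mtyping D2 u M2 m2 \<Longrightarrow> mtyping (D1 + D2) u (M1 + M2) (m1 + m2)"
proof (induction D1 u M1 m1 rule: typing_mtyping.inducts(2)[where ?P1.0="\<lambda>_ _ _ _. True"])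
  case (madd G u \<tau> n D M m)
  then show ?case by (auto intro!: mtyping_addI simp: add_ac)
qed auto

lemma mtyping_unionD:
  assumes "mtyping D u (M1 + M2) m"
  obtains D1 D2 m1 m2 where "D = D1 + D2" "m = m1 + m2"
    "mtyping D1 u M1 m1" "mtyping D2 u M2 m2"
proof -
  have "\<exists>D1 D2 m1 m2. D = D1 + D2 \<and> m = m1 + m2 \<and> mtyping D1 u M1 m1 \<and> mtyping D2 u M2 m2"
    if "mtyping D u M m" "M = M1 + M2" for D M m
    using that
  proof (induction D u M m arbitrary: M1 M2
      rule: typing_mtyping.inducts(2)[where ?P1.0="\<lambda>_ _ _ _. True"])
    case (mempty u)
    then have "M1 = {#}" "M2 = {#}" by simp_all
    then show ?case using typing_mtyping.mempty[of u] by (metis add_0)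
  next
    case (madd G u \<tau> n D M m)
    show ?case
    proof (cases "\<tau> \<in># M1")
      case True
      then obtain M1' where M1: "M1 = add_mset \<tau> M1'" by (metis multi_member_split)
      with madd.prems madd.IH[of M1' M2] obtain D1 D2 m1 m2 where
        "D = D1 + D2" "m = m1 + m2" "mtyping D1 u M1' m1" "mtyping D2 u M2 m2" by force
      moreover have "mtyping (G + D1) u M1 (n + m1)"
        using M1 madd.hyps(1) \<open>mtyping D1 u M1' m1\<close> by (simp add: typing_mtyping.madd)
      ultimately show ?thesis by (metis add.assoc)
    next
      case False
      with madd.prems have "\<tau> \<in># M2" by (metis add_mset_add_single union_iff union_single_eq_member)
      then obtain M2' where M2: "M2 = add_mset \<tau> M2'" by (metis multi_member_split)
      with madd.prems madd.IH[of M1 M2'] obtain D1 D2 m1 m2 where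
        "D = D1 + D2" "m = m1 + m2" "mtyping D1 u M1 m1" "mtyping D2 u M2' m2" by force
      moreover have "mtyping (G + D2) u M2 (n + m2)"
        using M2 madd.hyps(1) \<open>mtyping D2 u M2' m2\<close> by (simp add: typing_mtyping.madd)
      ultimately show ?thesis by (metis add.left_commute)
    qed
  qed auto
  with assms that show ?thesis by blast
qed

lemma typing_lift:
  shows "typing G p \<tau> n \<Longrightarrow> typing (ctx_insert j G) (lift j p) \<tau> n"
    and "mtyping G p M n \<Longrightarrow> mtyping (ctx_insert j G) (lift j p) M n"
proof (induction arbitrary: j and j rule: typing_mtyping.inducts)
  case (var x \<tau>)
  then show ?case by (auto intro: typing_mtyping.var)
next
  case (lam G p \<tau> n)
  then show ?case by (auto intro!: typing_lamI[OF lam.IH[of "Suc j"]])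
qed (auto intro: typing_mtyping.intros)

lemma typing_subst:
  shows "typing G p \<tau> n \<Longrightarrow> mtyping D u (G j) m
      \<Longrightarrow> \<exists>n'\<le>n + m. typing (ctx_drop j G + D) (subst j u p) \<tau> n'"
    and "mtyping G p M n \<Longrightarrow> mtyping D u (G j) m
      \<Longrightarrow> \<exists>n'\<le>n + m. mtyping (ctx_drop j G + D) (subst j u p) M n'"
proof (induction arbitrary: j u D m and j u D m rule: typing_mtyping.inducts)
  case (var x \<tau>)
  show ?case
  proof (cases "x = j")
    case True
    with var.prems have "typing D u \<tau> m" by (simp add: ctx_single_apply mtyping_single_iff)
    with True show ?thesis by (auto intro: le_SucI)
  next
    case False
    with var.prems have "D = 0" "m = 0" by (auto simp: ctx_single_apply dest: mtyping_emptyD)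
    with False show ?thesis by (auto simp: ctx_drop_single intro: typing_mtyping.var)
  qed
next
  case (const c \<tau>)
  then have "D = 0" by (auto simp: zero_fun_apply dest: mtyping_emptyD)
  then show ?case by (auto intro: typing_mtyping.const)
next
  case (lam G p \<tau> n)
  have "mtyping (ctx_insert 0 D) (lift 0 u) (G (Suc j)) m"
    using typing_lift(2) lam.prems by (fastforce simp: ctx_drop_def)
  from lam.IH[OF this] obtain n' where "n' \<le> n + m"
    "typing (ctx_drop (Suc j) G + ctx_insert 0 D) (subst (Suc j) (lift 0 u) p) \<tau> n'" by blast
  then show ?case
    by (intro exI[of _ "Suc n'"]) (auto intro!: typing_lamI simp: plus_fun_apply)
next
  case (app G r M \<tau> n D' u' m')
  from app.prems obtain D1 D2 m1 m2 where split: "D = D1 + D2" "m = m1 + m2"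
    "mtyping D1 u (G j) m1" "mtyping D2 u (D' j) m2"
    by (auto simp: plus_fun_apply elim: mtyping_unionD)
  from app.IH(1)[OF split(3)] app.IH(2)[OF split(4)] obtain n1 n2 where
    le: "n1 \<le> n + m1" "n2 \<le> m' + m2" and
    "typing (ctx_drop j G + D1) (subst j u r) (Arrow M \<tau>) n1"
    "mtyping (ctx_drop j D' + D2) (subst j u u') M n2" by blast
  with le split show ?case
    by (intro exI[of _ "Suc (n1 + n2)"]) (auto simp: add_ac intro!: typing_appI)
next
  case (mempty u')
  then have "D = 0" "m = 0" by (auto simp: zero_fun_apply dest: mtyping_emptyD)
  then show ?case by (auto intro: typing_mtyping.mempty)
next
  case (madd G u' \<tau> n D' M m')
  from madd.prems obtain D1 D2 m1 m2 where split: "D = D1 + D2" "m = m1 + m2"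
    "mtyping D1 u (G j) m1" "mtyping D2 u (D' j) m2"
    by (auto simp: plus_fun_apply elim: mtyping_unionD)
  from madd.IH(1)[OF split(3)] madd.IH(2)[OF split(4)] obtain n1 n2 where
    le: "n1 \<le> n + m1" "n2 \<le> m' + m2" and
    "typing (ctx_drop j G + D1) (subst j u u') \<tau> n1"
    "mtyping (ctx_drop j D' + D2) (subst j u u') M n2" by blast
  with le split show ?case
    by (intro exI[of _ "n1 + n2"]) (auto simp: add_ac intro!: mtyping_addI)
qed

lemma eq_lift_iff:
  "Var x = lift j u \<longleftrightarrow> (\<exists>i. u = Var i \<and> x = (if i < j then i else Suc i))"
  "Const c = lift j u \<longleftrightarrow> u = Const c"
  "Lam p = lift j u \<longleftrightarrow> (\<exists>r. u = Lam r \<and> p = lift (Suc j) r)"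
  "App a b = lift j u \<longleftrightarrow> (\<exists>r1 r2. u = App r1 r2 \<and> a = lift j r1 \<and> b = lift j r2)"
  by (cases u; auto)+

lemma typing_lift_inverse:
  shows "typing G' x \<tau> n \<Longrightarrow> x = lift j u \<Longrightarrow> \<exists>G. G' = ctx_insert j G \<and> typing G u \<tau> n"
    and "mtyping G' x M n \<Longrightarrow> x = lift j u \<Longrightarrow> \<exists>G. G' = ctx_insert j G \<and> mtyping G u M n"
proof (induction arbitrary: j u and j u rule: typing_mtyping.inducts)
  case (var x \<tau>)
  then obtain i where "u = Var i" "x = (if i < j then i else Suc i)" by (auto simp: eq_lift_iff)
  then show ?case by (intro exI[of _ "ctx_single i \<tau>"]) (auto intro: typing_mtyping.var)
next
  case (const c \<tau>)
  then show ?case by (intro exI[of _ 0]) (auto simp: eq_lift_iff intro: typing_mtyping.const)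
next
  case (lam G p \<tau> n)
  then obtain r where r: "u = Lam r" "p = lift (Suc j) r" by (auto simp: eq_lift_iff)
  with lam.IH obtain G0 where "G = ctx_insert (Suc j) G0" "typing G0 r \<tau> n" by blast
  with r show ?case by (intro exI[of _ "ctx_drop 0 G0"]) (auto intro!: typing_lamI)
next
  case (app G r M \<tau> n D u' m)
  then obtain r1 r2 where r: "u = App r1 r2" "r = lift j r1" "u' = lift j r2"
    by (auto simp: eq_lift_iff)
  with app.IH obtain G0 D0 where
    "G = ctx_insert j G0" "typing G0 r1 (Arrow M \<tau>) n" "D = ctx_insert j D0" "mtyping D0 r2 M m"
    by blast
  with r show ?case by (intro exI[of _ "G0 + D0"]) (auto intro!: typing_appI)
next
  case (mempty u')
  then show ?case by (intro exI[of _ 0]) (auto intro: typing_mtyping.mempty)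
next
  case (madd G u' \<tau> n D M m)
  with madd.IH obtain G0 D0 where
    "G = ctx_insert j G0" "typing G0 u \<tau> n" "D = ctx_insert j D0" "mtyping D0 u M m"
    by blast
  then show ?case by (intro exI[of _ "G0 + D0"]) (auto intro!: mtyping_addI)
qed

lemma eq_subst_iff:
  assumes "p \<noteq> Var j"
  shows "Var y = subst j u p \<longleftrightarrow> (\<exists>i. p = Var i \<and> i \<noteq> j \<and> y = (if j < i then i - 1 else i))"
    and "Const c = subst j u p \<longleftrightarrow> p = Const c"
    and "Lam q = subst j u p \<longleftrightarrow> (\<exists>r. p = Lam r \<and> q = subst (Suc j) (lift 0 u) r)"
    and "App a b = subst j u p \<longleftrightarrow>
      (\<exists>r1 r2. p = App r1 r2 \<and> a = subst j u r1 \<and> b = subst j u r2)"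
  using assms by (cases p; auto)+

lemma typing_subst_Var_inverse:
  assumes "typing G' u \<tau> n"
  shows "\<exists>G D n1 m. G' = ctx_drop j G + D \<and> typing G (Var j) \<tau> n1 \<and> mtyping D u (G j) m"
proof -
  have "G' = ctx_drop j (ctx_single j \<tau>) + G'" "mtyping G' u (ctx_single j \<tau> j) n"
    using assms by (simp_all add: ctx_single_apply mtyping_single_iff)
  with typing_mtyping.var[of j \<tau>] show ?thesis by blast
qed

lemma typing_subst_inverse:
  shows "typing G' x \<tau> n \<Longrightarrow> x = subst j u p \<Longrightarrow>
      \<exists>G D n1 m. G' = ctx_drop j G + D \<and> typing G p \<tau> n1 \<and> mtyping D u (G j) m"
    and "mtyping G' x M n \<Longrightarrow> x = subst j u p \<Longrightarrow>
      \<exists>G D n1 m. G' = ctx_drop j G + D \<and> mtyping G p M n1 \<and> mtyping D u (G j) m"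
proof (induction arbitrary: j u p and j u p rule: typing_mtyping.inducts)
  case (var x \<tau>)
  show ?case
  proof (cases "p = Var j")
    case True
    with var show ?thesis using typing_subst_Var_inverse[OF typing_mtyping.var] by auto
  next
    case False
    with var obtain i where i: "p = Var i" "i \<noteq> j" "x = (if j < i then i - 1 else i)"
      by (auto simp: eq_subst_iff)
    then have "ctx_single x \<tau> = ctx_drop j (ctx_single i \<tau>) + 0"
      "mtyping 0 u (ctx_single i \<tau> j) 0"
      by (auto simp: ctx_drop_single ctx_single_apply intro: typing_mtyping.mempty)
    with i(1) typing_mtyping.var[of i \<tau>] show ?thesis by blast
  qed
next
  case (const c \<tau>)
  show ?case
  proof (cases "p = Var j")
    case True
    with const show ?thesis using typing_subst_Var_inverse[OF typing_mtyping.const] by auto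
  next
    case False
    with const have "p = Const c" by (auto simp: eq_subst_iff)
    moreover have "(0::ctx) = ctx_drop j 0 + 0" "mtyping 0 u ((0::ctx) j) 0"
      by (simp_all add: zero_fun_apply typing_mtyping.mempty)
    ultimately show ?thesis using typing_mtyping.const[of c \<tau>] by blast
  qed
next
  case (lam G q \<tau> n)
  show ?case
  proof (cases "p = Var j")
    case True
    with lam show ?thesis using typing_subst_Var_inverse[OF typing_mtyping.lam[OF lam.hyps]] by auto
  next
    case False
    with lam obtain r where r: "p = Lam r" "q = subst (Suc j) (lift 0 u) r"
      by (auto simp: eq_subst_iff)
    from lam.IH[OF r(2)] obtain G1 D1 n1 m where
      "G = ctx_drop (Suc j) G1 + D1" "typing G1 r \<tau> n1" "mtyping D1 (lift 0 u) (G1 (Suc j)) m"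
      by blast
    moreover from typing_lift_inverse(2)[OF \<open>mtyping D1 (lift 0 u) (G1 (Suc j)) m\<close> refl]
    obtain D where "D1 = ctx_insert 0 D" "mtyping D u (G1 (Suc j)) m" by blast
    moreover have "ctx_drop 0 G = ctx_drop j (ctx_drop 0 G1) + D" "G 0 = G1 0"
      using \<open>G = ctx_drop (Suc j) G1 + D1\<close> \<open>D1 = ctx_insert 0 D\<close>
      by (simp_all add: plus_fun_apply)
    moreover have "ctx_drop 0 G1 j = G1 (Suc j)" by (simp add: ctx_drop_def)
    ultimately show ?thesis using r typing_mtyping.lam[of G1 r \<tau> n1] by metis
  qed
next
  case (app G r M \<tau> n D u' m)
  show ?case
  proof (cases "p = Var j")
    case True
    with app show ?thesis
      using typing_subst_Var_inverse[OF typing_mtyping.app[OF app.hyps(1,2)]] by auto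
  next
    case False
    with app obtain r1 r2 where r: "p = App r1 r2" "r = subst j u r1" "u' = subst j u r2"
      by (auto simp: eq_subst_iff)
    from app.IH(1)[OF r(2)] obtain Ga Da na ma where
      a: "G = ctx_drop j Ga + Da" "typing Ga r1 (Arrow M \<tau>) na" "mtyping Da u (Ga j) ma" by blast
    from app.IH(2)[OF r(3)] obtain Gb Db nb mb where
      b: "D = ctx_drop j Gb + Db" "mtyping Gb r2 M nb" "mtyping Db u (Gb j) mb" by blast
    have "mtyping (Da + Db) u ((Ga + Gb) j) (ma + mb)"
      using mtyping_union[OF a(3) b(3)] by (simp add: plus_fun_apply)
    moreover have "G + D = ctx_drop j (Ga + Gb) + (Da + Db)"
      using a(1) b(1) by (simp add: add_ac)
    ultimately show ?thesis using r(1) typing_mtyping.app[OF a(2) b(2)] by blast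
  qed
next
  case (mempty u')
  have "(0::ctx) = ctx_drop j 0 + 0" "mtyping 0 u ((0::ctx) j) 0"
    by (simp_all add: zero_fun_apply typing_mtyping.mempty)
  then show ?case using typing_mtyping.mempty[of p] by blast
next
  case (madd G u' \<tau> n D M m)
  from madd.IH(1)[OF madd.prems] obtain Ga Da na ma where
    a: "G = ctx_drop j Ga + Da" "typing Ga p \<tau> na" "mtyping Da u (Ga j) ma" by blast
  from madd.IH(2)[OF madd.prems] obtain Gb Db nb mb where
    b: "D = ctx_drop j Gb + Db" "mtyping Gb p M nb" "mtyping Db u (Gb j) mb" by blast
  have "mtyping (Da + Db) u ((Ga + Gb) j) (ma + mb)"
    using mtyping_union[OF a(3) b(3)] by (simp add: plus_fun_apply)
  moreover have "G + D = ctx_drop j (Ga + Gb) + (Da + Db)"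
    using a(1) b(1) by (simp add: add_ac)
  ultimately show ?case using typing_mtyping.madd[OF a(2) b(2)] by blast
qed

lemma beta_step_redex: "beta_step (App (Lam q) u) (subst 0 u q)"
  unfolding beta_step_def using compat.base[of R_beta, OF R_beta.intros[of q u]]
  by (simp add: subst0_def)

lemma beta_step_Lam: "beta_step p p' \<Longrightarrow> beta_step (Lam p) (Lam p')"
  unfolding beta_step_def by (rule compat.lam)

lemma beta_step_AppL: "beta_step p p' \<Longrightarrow> beta_step (App p u) (App p' u)"
  unfolding beta_step_def by (rule compat.appL)

lemma typing_redex_contract:
  assumes "typing G (App (Lam q) u) \<tau> n"
  shows "\<exists>n'<n. typing G (subst 0 u q) \<tau> n'"
proof -
  from assms obtain G0 D M k m where app:
    "G = G0 + D" "n = Suc (k + m)" "typing G0 (Lam q) (Arrow M \<tau>) k" "mtyping D u M m"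
    by (cases rule: typing_AppE)
  from app(3) obtain G1 k' where lam:
    "G0 = ctx_drop 0 G1" "M = G1 0" "k = Suc k'" "typing G1 q \<tau> k'"
    by (cases rule: typing_LamE) auto
  from typing_subst(1)[OF lam(4)] app(4) lam(2) obtain n' where
    "n' \<le> k' + m" "typing (ctx_drop 0 G1 + D) (subst 0 u q) \<tau> n'" by blast
  moreover have "n' < n" using \<open>n' \<le> k' + m\<close> app(2) lam(3) by simp
  ultimately show ?thesis using app(1) lam(1) by blast
qed

lemma typing_head_step:
  "typing G t \<tau> n \<Longrightarrow> is_hnf t \<or> (\<exists>t' n'. beta_step t t' \<and> n' < n \<and> typing G t' \<tau> n')"
proof (induction rule: typing_mtyping.inducts(1)[where ?P2.0="\<lambda>_ _ _ _. True"])
  case (lam G p \<tau> n)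
  from lam.IH show ?case
  proof
    assume "is_hnf p"
    then show ?thesis by (auto intro: is_hnf.intros)
  next
    assume "\<exists>p' n'. beta_step p p' \<and> n' < n \<and> typing G p' \<tau> n'"
    then obtain p' n' where "beta_step p p'" "n' < n" "typing G p' \<tau> n'" by blast
    then show ?thesis by (blast intro: beta_step_Lam typing_mtyping.lam Suc_mono)
  qed
next
  case (app G r M \<tau> n D u m)
  consider "\<exists>q. r = Lam q" | "hnf_body r" | "\<exists>r' n'. beta_step r r' \<and> n' < n \<and> typing G r' (Arrow M \<tau>) n'"
    using app.IH(1) by (auto elim: is_hnf.cases)
  then show ?case
  proof cases
    case 1
    then obtain q where "r = Lam q" by blast
    with typing_redex_contract typing_mtyping.app[OF app.hyps(1,2)] show ?thesis
      using beta_step_redex by blast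
  next
    case 2
    then show ?thesis by (auto intro: is_hnf.intros hnf_body.intros)
  next
    case 3
    then obtain r' n' where "beta_step r r'" "n' < n" "typing G r' (Arrow M \<tau>) n'" by blast
    with app.hyps(2) show ?thesis
      by (blast intro: beta_step_AppL typing_mtyping.app add_less_mono1 Suc_mono)
  qed
qed (auto intro: is_hnf.intros hnf_body.intros)

lemma typing_imp_has_hnf: "typing G t \<tau> n \<Longrightarrow> has_hnf t"
proof (induction n arbitrary: t rule: less_induct)
  case (less n)
  from typing_head_step[OF less.prems] show ?case
  proof
    assume "is_hnf t"
    then show ?thesis unfolding has_hnf_def by blast
  next
    assume "\<exists>t' n'. beta_step t t' \<and> n' < n \<and> typing G t' \<tau> n'"
    then obtain t' n' where "beta_step t t'" "n' < n" "typing G t' \<tau> n'" by blast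
    with less.IH have "has_hnf t'" by blast
    with \<open>beta_step t t'\<close> show ?thesis
      unfolding has_hnf_def by (meson converse_rtranclp_into_rtranclp)
  qed
qed

lemma mtyping_transfer:
  assumes "mtyping D u M m"
    and "\<And>G \<tau> n. n \<le> m \<Longrightarrow> typing G u \<tau> n \<Longrightarrow> \<exists>n'. typing G u' \<tau> n'"
  shows "\<exists>m'. mtyping D u' M m'"
  using assms
proof (induction D u M m rule: typing_mtyping.inducts(2)[where ?P1.0="\<lambda>_ _ _ _. True"])
  case (mempty u)
  then show ?case by (auto intro: typing_mtyping.mempty)
next
  case (madd G u \<tau> n D M m)
  then obtain n' m' where "typing G u' \<tau> n'" "mtyping D u' M m'"
    by (metis le_add1 le_add2 le_trans)
  then show ?case by (auto intro: typing_mtyping.madd)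
qed auto

lemma mtyping_transfer_le:
  assumes "mtyping D u M m"
    and "\<And>G \<tau> n. typing G u \<tau> n \<Longrightarrow> \<exists>n'\<le>n. typing G u' \<tau> n'"
  shows "\<exists>m'\<le>m. mtyping D u' M m'"
  using assms
proof (induction D u M m rule: typing_mtyping.inducts(2)[where ?P1.0="\<lambda>_ _ _ _. True"])
  case (mempty u)
  then show ?case by (auto intro: typing_mtyping.mempty)
next
  case (madd G u \<tau> n D M m)
  then obtain n' m' where "n' \<le> n" "typing G u' \<tau> n'" "m' \<le> m" "mtyping D u' M m'" by metis
  then show ?case by (intro exI[of _ "n' + m'"]) (auto intro: typing_mtyping.madd)
qed auto

lemma typing_beta_expand: "beta_step t t' \<Longrightarrow> typing G t' \<tau> n \<Longrightarrow> \<exists>n'. typing G t \<tau> n'"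
  unfolding beta_step_def
proof (induction arbitrary: G \<tau> n rule: compat.induct)
  case (base t t')
  then obtain q u where redex: "t = App (Lam q) u" "t' = subst 0 u q"
    by (auto elim: R_beta.cases simp: subst0_def)
  from typing_subst_inverse(1)[OF base.prems[unfolded redex] refl] obtain G1 D n1 m where
    "G = ctx_drop 0 G1 + D" "typing G1 q \<tau> n1" "mtyping D u (G1 0) m" by blast
  then show ?case using redex by (auto intro: typing_mtyping.app typing_mtyping.lam)
next
  case (appL a a' b)
  from appL.prems obtain G1 D M k m where
    "G = G1 + D" "typing G1 a' (Arrow M \<tau>) k" "mtyping D b M m"
    by (cases rule: typing_AppE)
  with appL.IH show ?case by (blast intro: typing_mtyping.app)
next
  case (appR a a' b)
  from appR.prems obtain G1 D M k m where
    "G = G1 + D" "typing G1 b (Arrow M \<tau>) k" "mtyping D a' M m"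
    by (cases rule: typing_AppE)
  with appR.IH mtyping_transfer[of D a' M m a] show ?case by (blast intro: typing_mtyping.app)
next
  case (lam a a')
  from lam.prems obtain G1 \<sigma> k where "G = ctx_drop 0 G1" "\<tau> = Arrow (G1 0) \<sigma>" "typing G1 a' \<sigma> k"
    by (cases rule: typing_LamE)
  with lam.IH show ?case by (blast intro: typing_mtyping.lam)
qed

lemma has_hnf_imp_typable:
  assumes "has_hnf t"
  shows "\<exists>G \<tau> n. typing G t \<tau> n"
proof -
  have hnf_body_typable: "\<exists>G n. typing G h \<tau> n" if "hnf_body h" for h :: "'c lterm" and \<tau>
    using that
  proof (induction arbitrary: \<tau>)
    case (3 h u)
    then obtain G n where "typing G h (Arrow {#} \<tau>) n" by blast
    from typing_mtyping.app[OF this typing_mtyping.mempty] show ?case by blast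
  qed (auto intro: typing_mtyping.var typing_mtyping.const)
  have hnf_typable: "\<exists>G \<tau> n. typing G h \<tau> n" if "is_hnf h" for h :: "'c lterm"
    using that by induction (use hnf_body_typable typing_mtyping.lam in blast)+
  from assms obtain h where "beta_step\<^sup>*\<^sup>* t h" "is_hnf h" unfolding has_hnf_def by blast
  then show ?thesis
    by (induction rule: converse_rtranclp_induct) (use hnf_typable typing_beta_expand in blast)+
qed

lemma typing_beta_bot_reduce:
  "beta_bot_step t t' \<Longrightarrow> typing G t \<tau> n \<Longrightarrow> \<exists>n'\<le>n. typing G t' \<tau> n'"
  unfolding beta_bot_step_def
proof (induction arbitrary: G \<tau> n rule: compat.induct)
  case (base t t')
  then consider "R_beta t t'" | "R_bot t t'" by blast
  then show ?case
  proof cases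
    case 1
    then obtain q u where "t = App (Lam q) u" "t' = subst 0 u q"
      by (auto elim: R_beta.cases simp: subst0_def)
    with typing_redex_contract base.prems show ?thesis by (blast intro: less_imp_le)
  next
    case 2
    with typing_imp_has_hnf[OF base.prems] show ?thesis by (auto elim: R_bot.cases)
  qed
next
  case (appL a a' b)
  from appL.prems obtain G1 D M k m where
    "G = G1 + D" "n = Suc (k + m)" "typing G1 a (Arrow M \<tau>) k" "mtyping D b M m"
    by (cases rule: typing_AppE)
  with appL.IH show ?case by (blast intro: typing_mtyping.app add_le_mono1 Suc_le_mono[THEN iffD2])
next
  case (appR a a' b)
  from appR.prems obtain G1 D M k m where
    "G = G1 + D" "n = Suc (k + m)" "typing G1 b (Arrow M \<tau>) k" "mtyping D a M m"
    by (cases rule: typing_AppE)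
  with appR.IH mtyping_transfer_le[of D a M m a'] show ?case
    by (blast intro: typing_mtyping.app add_le_mono Suc_le_mono[THEN iffD2])
next
  case (lam a a')
  from lam.prems obtain G1 \<sigma> k where
    "G = ctx_drop 0 G1" "\<tau> = Arrow (G1 0) \<sigma>" "n = Suc k" "typing G1 a \<sigma> k"
    by (cases rule: typing_LamE)
  with lam.IH show ?case by (blast intro: typing_mtyping.lam Suc_le_mono[THEN iffD2])
qed

lemma typing_beta_bot_reduces:
  "beta_bot_step\<^sup>*\<^sup>* t t' \<Longrightarrow> typing G t \<tau> n \<Longrightarrow> \<exists>n'\<le>n. typing G t' \<tau> n'"
proof (induction arbitrary: n rule: rtranclp_induct)
  case (step y z)
  then show ?case by (meson le_trans typing_beta_bot_reduce)
qed auto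

lemma inf_bb_typing: "inf_bb t u \<Longrightarrow> typing G t \<tau> n \<Longrightarrow> \<exists>n'. typing G u \<tau> n'"
proof (induction n arbitrary: t u G \<tau> rule: less_induct)
  case (less n)
  from less.prems(1) show ?case
  proof cases
    case atom
    with typing_beta_bot_reduces less.prems(2) show ?thesis by blast
  next
    case (app t1 t2 t1' t2')
    with typing_beta_bot_reduces less.prems(2) obtain n' where
      "n' \<le> n" "typing G (App t1 t2) \<tau> n'" by blast
    then obtain G1 D M k m where
      typed: "G = G1 + D" "typing G1 t1 (Arrow M \<tau>) k" "mtyping D t2 M m" "Suc (k + m) \<le> n"
      by (auto elim: typing_AppE)
    moreover have "k < n" using typed(4) by simp
    ultimately obtain k' where "typing G1 t1' (Arrow M \<tau>) k'" using less.IH app(3) by blast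
    moreover have "\<exists>m'. mtyping D t2' M m'"
    proof (rule mtyping_transfer[OF typed(3)])
      fix G' \<sigma> l
      assume "l \<le> m" "typing G' t2 \<sigma> l"
      moreover have "l < n" using \<open>l \<le> m\<close> typed(4) by simp
      ultimately show "\<exists>l'. typing G' t2' \<sigma> l'" using less.IH app(4) by blast
    qed
    ultimately show ?thesis using typed(1) app(1) by (blast intro: typing_mtyping.app)
  next
    case (lam r r')
    with typing_beta_bot_reduces less.prems(2) obtain n' where
      "n' \<le> n" "typing G (Lam r) \<tau> n'" by blast
    then obtain G1 \<sigma> k where
      typed: "G = ctx_drop 0 G1" "\<tau> = Arrow (G1 0) \<sigma>" "typing G1 r \<sigma> k" "Suc k \<le> n"
      by (auto elim: typing_LamE)
    moreover have "k < n" using typed(4) by simp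
    ultimately obtain k' where "typing G1 r' \<sigma> k'" using less.IH lam(3) by blast
    with typed(1,2) lam(1) show ?thesis by (blast intro: typing_mtyping.lam)
  qed
qed

theorem corollary5p31:
  fixes s t :: "'c lterm"
  assumes "\<not> has_hnf s" and "inf_bb t s"
  shows "\<not> has_hnf t"
proof
  assume "has_hnf t"
  then obtain G \<tau> n where "typing G t \<tau> n" using has_hnf_imp_typable by blast
  with inf_bb_typing[OF assms(2)] obtain n' where "typing G s \<tau> n'" by blast
  with assms(1) show False by (blast dest: typing_imp_has_hnf)
qed

end
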